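(* Let $n\geq2$ be finite and let $\mathfrak A\in SA_n$. If $\mathfrak A$ is atomic and $\sum_{x\in\mathrm{At}\mathfrak A}s_\tau x=1$ for every $\tau\in{}^nn$, then $\mathfrak A$ is completely representable. Conversely, if $\mathfrak A$ is completely representable, then $\mathfrak A$ is atomic and $\sum_{x\in\mathrm{At}\mathfrak A}s_\tau x=1$ for every $\tau\in{}^nn$.
   Context: $SA_n=\mathbf{Mod}(\Sigma'_n)$, where $\Sigma'_n$ (signature $\wedge,-,s^i_j,s_{ij}$, $i\neq j<n$) consists of the Boolean axioms, equations saying each $s^i_j,s_{ij}$ is a Boolean endomorphism, and $t_1(x)=t_2(x)$ for all words $t_1,t_2$ with $\hat t_1=\hat t_2$ in ${}^nn$; here $\hat{}$ sends the empty word to $Id_n$, $(s_{ij}t)^{\hat{}}=[i,j]\circ\hat t$, $(s^i_jt)^{\hat{}}=[i/j]\circ\hat t$, with $[i,j]$ the transposition and $[i/j]$ the map sending $i$ to $j$ and fixing the rest. For $\tau\in{}^nn$, $s_\tau$ is the term operation $t$ for any word $t$ with $\hat t=\tau$. A set $D\subseteq{}^nU$ is dipermutable if $s\circ[i/j]\in D$ and $s\circ[i,j]\in D$ for all $s\in D$, $i\neq j$; $\wp(D)$ has operations $\cap$, complement relative to $D$, $S^i_j(X)=\{q\in D:q\circ[i/j]\in X\}$, $S_{ij}(X)=\{q\in D:q\circ[i,j]\in X\}$. $\mathfrak A$ is completely representable if there is an injective homomorphism $f:\mathfrak A\to\wp(D)$, $D$ dipermutable, with $f(\prod Y)=\bigcap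 f[Y]$ whenever $\prod Y$ exists. $\mathrm{At}\mathfrak A$ is the set of atoms. *)

theory Defs
  imports Main
begin

definition repl_map :: "nat \<Rightarrow> nat \<Rightarrow> nat \<Rightarrow> nat" where
  "repl_map i j = (\<lambda>k. if k = i then j else k)"

definition transp_map :: "nat \<Rightarrow> nat \<Rightarrow> nat \<Rightarrow> nat" where
  "transp_map i j = (\<lambda>k. if k = i then j else if k = j then i else k)"

(* Letters of words: SRep i j is s^i_j, SSw i j is s_ij *)
datatype sa_letter = SRep nat nat | SSw nat nat

fun letter_map :: "sa_letter \<Rightarrow> nat \<Rightarrow> nat" where
  "letter_map (SRep i j) = repl_map i j"
| "letter_map (SSw i j) = transp_map i j"

fun letter_ok :: "nat \<Rightarrow> sa_letter \<Rightarrow> bool" where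
  "letter_ok n (SRep i j) = (i \<noteq> j \<and> i < n \<and> j < n)"
| "letter_ok n (SSw i j) = (i \<noteq> j \<and> i < n \<and> j < n)"

definition word_ok :: "nat \<Rightarrow> sa_letter list \<Rightarrow> bool" where
  "word_ok n w = (\<forall>l\<in>set w. letter_ok n l)"

fun word_hat :: "sa_letter list \<Rightarrow> nat \<Rightarrow> nat" where
  "word_hat [] = id"
| "word_hat (l # w) = letter_map l \<circ> word_hat w"

fun word_eval :: "(nat \<Rightarrow> nat \<Rightarrow> 'a \<Rightarrow> 'a) \<Rightarrow> (nat \<Rightarrow> nat \<Rightarrow> 'a \<Rightarrow> 'a)
                   \<Rightarrow> sa_letter list \<Rightarrow> 'a \<Rightarrow> 'a" where
  "word_eval ss sw [] x = x"
| "word_eval ss sw (SRep i j # w) x = ss i j (word_eval ss sw w x)"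
| "word_eval ss sw (SSw i j # w) x = sw i j (word_eval ss sw w x)"

definition bool_endo :: "('a::boolean_algebra \<Rightarrow> 'a) \<Rightarrow> bool" where
  "bool_endo h = (\<forall>x y. h (inf x y) = inf (h x) (h y) \<and> h (- x) = - h x)"

(* membership in SA_n = Mod(\<Sigma>'_n); the Boolean axioms are given by the type class *)
definition SA :: "nat \<Rightarrow> (nat \<Rightarrow> nat \<Rightarrow> 'a::boolean_algebra \<Rightarrow> 'a)
                  \<Rightarrow> (nat \<Rightarrow> nat \<Rightarrow> 'a \<Rightarrow> 'a) \<Rightarrow> bool" where
  "SA n ss sw =
     ((\<forall>i j. i \<noteq> j \<and> i < n \<and> j < n \<longrightarrow> bool_endo (ss i j) \<and> bool_endo (sw i j)) \<and>
      (\<forall>w1 w2. word_ok n w1 \<and> word_ok n w2 \<and> (\<forall>k<n. word_hat w1 k = word_hat w2 k)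
          \<longrightarrow> (\<forall>x. word_eval ss sw w1 x = word_eval ss sw w2 x)))"

definition is_nmap :: "nat \<Rightarrow> (nat \<Rightarrow> nat) \<Rightarrow> bool" where
  "is_nmap n \<tau> = (\<forall>k<n. \<tau> k < n)"

definition s_tau :: "nat \<Rightarrow> (nat \<Rightarrow> nat \<Rightarrow> 'a \<Rightarrow> 'a) \<Rightarrow> (nat \<Rightarrow> nat \<Rightarrow> 'a \<Rightarrow> 'a)
                     \<Rightarrow> (nat \<Rightarrow> nat) \<Rightarrow> 'a \<Rightarrow> 'a" where
  "s_tau n ss sw \<tau> =
     word_eval ss sw (SOME w. word_ok n w \<and> (\<forall>k<n. word_hat w k = \<tau> k))"

definition is_atom :: "'a::boolean_algebra \<Rightarrow> bool" where
  "is_atom x = (x \<noteq> bot \<and> (\<forall>y. y \<le> x \<longrightarrow> y = bot \<or> y = x))"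

definition atomic :: "'a::boolean_algebra itself \<Rightarrow> bool" where
  "atomic _ = (\<forall>x::'a. x \<noteq> bot \<longrightarrow> (\<exists>a. is_atom a \<and> a \<le> x))"

definition is_sum :: "'a::boolean_algebra set \<Rightarrow> 'a \<Rightarrow> bool" where
  "is_sum X a = ((\<forall>x\<in>X. x \<le> a) \<and> (\<forall>b. (\<forall>x\<in>X. x \<le> b) \<longrightarrow> a \<le> b))"

definition is_prod :: "'a::boolean_algebra set \<Rightarrow> 'a \<Rightarrow> bool" where
  "is_prod X a = ((\<forall>x\<in>X. a \<le> x) \<and> (\<forall>b. (\<forall>x\<in>X. b \<le> x) \<longrightarrow> b \<le> a))"

definition nseqs :: "nat \<Rightarrow> 'b set \<Rightarrow> (nat \<Rightarrow> 'b) set" where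
  "nseqs n U = {s. (\<forall>k<n. s k \<in> U) \<and> (\<forall>k\<ge>n. s k = undefined)}"

definition dipermutable :: "nat \<Rightarrow> 'b set \<Rightarrow> (nat \<Rightarrow> 'b) set \<Rightarrow> bool" where
  "dipermutable n U D =
     (D \<subseteq> nseqs n U \<and>
      (\<forall>s\<in>D. \<forall>i j. i \<noteq> j \<and> i < n \<and> j < n \<longrightarrow>
          s \<circ> repl_map i j \<in> D \<and> s \<circ> transp_map i j \<in> D))"

definition complete_rep :: "nat \<Rightarrow> (nat \<Rightarrow> nat \<Rightarrow> 'a::boolean_algebra \<Rightarrow> 'a)
                  \<Rightarrow> (nat \<Rightarrow> nat \<Rightarrow> 'a \<Rightarrow> 'a) \<Rightarrow> (nat \<Rightarrow> 'b) set \<Rightarrow> ('a \<Rightarrow> (nat \<Rightarrow> 'b) set) \<Rightarrow> bool" where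
  "complete_rep n ss sw D f =
     ((\<forall>x. f x \<subseteq> D) \<and> inj f \<and>
      (\<forall>x y. f (inf x y) = f x \<inter> f y) \<and>
      (\<forall>x. f (- x) = D - f x) \<and>
      (\<forall>i j x. i \<noteq> j \<and> i < n \<and> j < n \<longrightarrow>
          f (ss i j x) = {q\<in>D. q \<circ> repl_map i j \<in> f x} \<and>
          f (sw i j x) = {q\<in>D. q \<circ> transp_map i j \<in> f x}) \<and>
      (\<forall>Y a. is_prod Y a \<longrightarrow> f a = D \<inter> \<Inter> (f ` Y)))"

definition completely_representable_in ::
  "'b itself \<Rightarrow> nat \<Rightarrow> (nat \<Rightarrow> nat \<Rightarrow> 'a::boolean_algebra \<Rightarrow> 'a) \<Rightarrow> (nat \<Rightarrow> nat \<Rightarrow> 'a \<Rightarrow> 'a) \<Rightarrow> bool" where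
  "completely_representable_in _ n ss sw =
     (\<exists>(U::'b set) D f. dipermutable n U D \<and> complete_rep n ss sw D f)"

end

theory Submission
  imports Defs "HOL-Combinatorics.Permutations"
begin

text \<open>Every \<open>\<tau> \<in> \<^sup>nn\<close> is the hat of a word (permutations are products of transpositions,
  and a non-injective map is a map with larger image composed with some \<open>[i/j]\<close>), so each
  \<open>s\<^sub>\<tau>\<close> is a Boolean endomorphism with \<open>s\<^sub>\<tau> \<circ> s\<^sup>i\<^sub>j = s\<^bsub>\<tau> \<circ> [i/j]\<^esub>\<close> and likewise for \<open>s\<^sub>i\<^sub>j\<close>.
  For an atomic algebra in which the \<open>s\<^sub>\<tau>\<close>-images of the atoms sum to \<open>1\<close>, represent \<open>x\<close>
  by the pairs \<open>(a, \<tau>)\<close> of an atom and a map with \<open>a \<le> s\<^sub>\<tau> x\<close>, each coded as the sequence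
  \<open>k \<mapsto> (a, \<tau> k)\<close>. Atomicity gives injectivity, and the sums give preservation of meets: an
  atom below every \<open>s\<^sub>\<tau> y\<close>, \<open>y \<in> Y\<close>, lies below some \<open>s\<^sub>\<tau> c\<close> with \<open>c\<close> an atom, and then
  \<open>c \<le> \<Prod>Y\<close>. Conversely a complete representation preserves all existing sums. A nonzero
  atomless element would be the sum of its parts whose images avoid a fixed point of its own
  image; and every point \<open>q\<close>, moved by a word for \<open>\<tau>\<close>, lies in the image of an atom \<open>a\<close>,
  i.e. \<open>q\<close> lies in the image of \<open>s\<^sub>\<tau> a\<close>.\<close>

definition realizes :: "nat \<Rightarrow> sa_letter list \<Rightarrow> (nat \<Rightarrow> nat) \<Rightarrow> bool" where
  "realizes n w \<tau> \<longleftrightarrow> word_ok n w \<and> (\<forall>k<n. word_hat w k = \<tau> k)"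

lemma word_ok_append [simp]: "word_ok n (u @ w) \<longleftrightarrow> word_ok n u \<and> word_ok n w"
  by (auto simp: word_ok_def)

lemma letter_map_less: "letter_ok n l \<Longrightarrow> k < n \<Longrightarrow> letter_map l k < n"
  by (cases l) (auto simp: repl_map_def transp_map_def)

lemma letter_map_fixed: "letter_ok n l \<Longrightarrow> n \<le> k \<Longrightarrow> letter_map l k = k"
  by (cases l) (auto simp: repl_map_def transp_map_def)

lemma word_hat_less: "word_ok n w \<Longrightarrow> k < n \<Longrightarrow> word_hat w k < n"
  by (induction w arbitrary: k) (simp_all add: word_ok_def letter_map_less)

lemma word_hat_append: "word_hat (u @ w) = word_hat u \<circ> word_hat w"
  by (induction u) (simp_all add: comp_assoc)

lemma word_eval_append: "word_eval ss sw (u @ w) x = word_eval ss sw u (word_eval ss sw w x)"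
  by (induction ss sw u x rule: word_eval.induct) simp_all

lemma realizes_permutation:
  assumes "p permutes {..<n}"
  shows "\<exists>w. realizes n w p"
  using assms finite_lessThan
proof (induction rule: permutes_induct)
  case id
  have "realizes n [] id" by (simp add: realizes_def word_ok_def)
  then show ?case by blast
next
  case (swap a b p)
  then obtain w where "realizes n w p" by blast
  then have "realizes n (SSw a b # w) (Transposition.transpose a b \<circ> p)"
    using swap.hyps by (auto simp: realizes_def word_ok_def transp_map_def transpose_def)
  then show ?case by blast
qed

lemma realizes_inj_nmap:
  assumes "is_nmap n \<tau>" and "inj_on \<tau> {..<n}"
  shows "\<exists>w. realizes n w \<tau>"
proof -
  define p where "p k = (if k < n then \<tau> k else k)" for k
  have "inj_on p {..<n}" and "p ` {..<n} \<subseteq> {..<n}"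
    using assms by (auto simp: p_def is_nmap_def inj_on_def)
  then have "bij_betw p {..<n} {..<n}"
    by (simp add: bij_betw_def endo_inj_surj)
  then have "p permutes {..<n}"
    by (rule bij_imp_permutes) (simp add: p_def)
  then obtain w where "realizes n w p" using realizes_permutation by blast
  then show ?thesis by (auto simp: realizes_def p_def)
qed

text \<open>Induction on the number of values missed by \<open>\<tau>\<close>: a non-injective \<open>\<tau>\<close> with
  \<open>\<tau> i = \<tau> j\<close> equals \<open>\<tau>(i := v) \<circ> [i/j]\<close> for any value \<open>v\<close> it misses.\<close>
lemma realizes_nmap:
  assumes "is_nmap n \<tau>"
  shows "\<exists>w. realizes n w \<tau>"
proof -
  have "n - card (\<tau> ` {..<n}) = d \<Longrightarrow> is_nmap n \<tau> \<Longrightarrow> \<exists>w. realizes n w \<tau>" for d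
  proof (induction d arbitrary: \<tau>)
    case 0
    have "card (\<tau> ` {..<n}) \<le> card {..<n}" by (rule card_image_le) simp
    with 0 have "inj_on \<tau> {..<n}" by (intro eq_card_imp_inj_on) simp_all
    with 0 show ?case by (intro realizes_inj_nmap)
  next
    case (Suc d)
    have img: "\<tau> ` {..<n} \<subseteq> {..<n}" using Suc.prems(2) by (auto simp: is_nmap_def)
    have card: "card (\<tau> ` {..<n}) < n" using Suc.prems(1) by simp
    then have "\<not> inj_on \<tau> {..<n}" by (auto dest: card_image)
    then obtain i j where ij: "i < n" "j < n" "i \<noteq> j" "\<tau> i = \<tau> j"
      by (auto simp: inj_on_def)
    from card have "\<tau> ` {..<n} \<noteq> {..<n}" by auto
    with img obtain v where v: "v < n" "v \<notin> \<tau> ` {..<n}" by auto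
    define \<sigma> where "\<sigma> = \<tau>(i := v)"
    have "\<sigma> ` {..<n} = insert v (\<tau> ` {..<n})"
      using ij by (auto simp: \<sigma>_def image_iff)
    then have "n - card (\<sigma> ` {..<n}) = d" using Suc.prems(1) v(2) by simp
    moreover have "is_nmap n \<sigma>" using Suc.prems(2) v(1) by (simp add: is_nmap_def \<sigma>_def)
    ultimately obtain w where w: "realizes n w \<sigma>" using Suc.IH by blast
    have "realizes n (w @ [SRep i j]) \<tau>"
      using w ij by (auto simp: realizes_def word_ok_def word_hat_append repl_map_def \<sigma>_def)
    then show ?case by blast
  qed
  then show ?thesis using assms by blast
qed

lemma bool_endo_mono: "bool_endo h \<Longrightarrow> x \<le> y \<Longrightarrow> h x \<le> h y"
  unfolding bool_endo_def by (metis inf.order_iff)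

lemma bool_endo_bot: "bool_endo h \<Longrightarrow> h bot = bot"
  unfolding bool_endo_def by (metis boolean_algebra.conj_cancel_right)

lemma atom_le_compl_iff: "is_atom a \<Longrightarrow> a \<le> - z \<longleftrightarrow> \<not> a \<le> z"
  unfolding is_atom_def by (metis inf.absorb1 inf_commute inf_shunt inf_sup_ord(1))

lemma atom_le_of_inf_ne_bot: "is_atom a \<Longrightarrow> inf a y \<noteq> bot \<Longrightarrow> a \<le> y"
  by (metis atom_le_compl_iff double_compl inf_shunt)

lemma atomic_separating_atom:
  assumes "atomic TYPE('a::boolean_algebra)" and "(x::'a) \<noteq> y"
  obtains a where "is_atom a" and "a \<le> x \<longleftrightarrow> \<not> a \<le> y"
proof -
  have "inf x (- y) \<noteq> bot \<or> inf y (- x) \<noteq> bot"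
    using assms(2) by (metis antisym double_compl inf_shunt)
  then obtain a where "is_atom a" "a \<le> inf x (- y) \<or> a \<le> inf y (- x)"
    using assms(1) unfolding atomic_def by blast
  then show ?thesis by (metis atom_le_compl_iff le_inf_iff that)
qed

lemma is_sum_atoms_top:
  assumes "atomic TYPE('a::boolean_algebra)"
  shows "is_sum {a::'a. is_atom a} top"
  unfolding is_sum_def
proof (intro conjI allI impI ballI top_greatest)
  fix b :: 'a assume ub: "\<forall>a\<in>{a. is_atom a}. a \<le> b"
  show "top \<le> b"
  proof (rule ccontr)
    assume "\<not> top \<le> b"
    then have "- b \<noteq> bot" by (metis compl_bot_eq double_compl order_refl)
    then obtain a where "is_atom a" "a \<le> - b" using assms unfolding atomic_def by blast
    with ub show False by (simp add: atom_le_compl_iff)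
  qed
qed

lemma is_prod_uminus_image: "is_sum X s \<Longrightarrow> is_prod (uminus ` X) (- s)"
  unfolding is_sum_def is_prod_def by (auto simp: compl_le_swap1 compl_le_swap2)

lemma s_tau_cong: "(\<And>k. k < n \<Longrightarrow> \<tau> k = \<sigma> k) \<Longrightarrow> s_tau n ss sw \<tau> = s_tau n ss sw \<sigma>"
  unfolding s_tau_def by (metis (no_types, lifting))

locale sa_algebra =
  fixes n :: nat and ss sw :: "nat \<Rightarrow> nat \<Rightarrow> 'a::boolean_algebra \<Rightarrow> 'a"
  assumes SA: "SA n ss sw"
begin

abbreviation s :: "(nat \<Rightarrow> nat) \<Rightarrow> 'a \<Rightarrow> 'a" where
  "s \<equiv> s_tau n ss sw"

lemma bool_endo_word_eval: "word_ok n w \<Longrightarrow> bool_endo (word_eval ss sw w)"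
proof (induction w)
  case Nil
  show ?case by (simp add: bool_endo_def)
next
  case (Cons l w)
  then have IH: "bool_endo (word_eval ss sw w)" and "letter_ok n l"
    by (auto simp: word_ok_def)
  then show ?case
    using SA by (cases l) (auto simp: SA_def bool_endo_def)
qed

lemma s_tau_eq_word_eval: "realizes n w \<tau> \<Longrightarrow> s \<tau> = word_eval ss sw w"
proof -
  assume w: "realizes n w \<tau>"
  let ?w = "SOME w. realizes n w \<tau>"
  have "realizes n ?w \<tau>" using w by (rule someI)
  with w have "word_eval ss sw ?w x = word_eval ss sw w x" for x
    using SA by (simp add: SA_def realizes_def)
  then show ?thesis by (simp add: s_tau_def realizes_def[symmetric] fun_eq_iff)
qed

lemma bool_endo_s_tau: "is_nmap n \<tau> \<Longrightarrow> bool_endo (s \<tau>)"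
  using realizes_nmap s_tau_eq_word_eval bool_endo_word_eval
  by (metis realizes_def)

lemma s_tau_inf: "is_nmap n \<tau> \<Longrightarrow> s \<tau> (inf x y) = inf (s \<tau> x) (s \<tau> y)"
  using bool_endo_s_tau by (simp add: bool_endo_def)

lemma s_tau_compl: "is_nmap n \<tau> \<Longrightarrow> s \<tau> (- x) = - s \<tau> x"
  using bool_endo_s_tau by (simp add: bool_endo_def)

lemma s_tau_id: "s id x = x"
  using s_tau_eq_word_eval[of "[]" id] by (simp add: realizes_def word_ok_def)

lemma s_tau_word_eval:
  assumes "is_nmap n \<tau>" and "word_ok n u"
  shows "s \<tau> (word_eval ss sw u x) = s (\<tau> \<circ> word_hat u) x"
proof -
  obtain w where w: "realizes n w \<tau>" using realizes_nmap assms(1) by blast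
  have "realizes n (w @ u) (\<tau> \<circ> word_hat u)"
    using w assms(2) by (auto simp: realizes_def word_hat_append word_hat_less)
  then show ?thesis
    using w by (simp add: s_tau_eq_word_eval word_eval_append)
qed

end

definition pair_seq :: "nat \<Rightarrow> 'a \<Rightarrow> (nat \<Rightarrow> nat) \<Rightarrow> nat \<Rightarrow> 'a \<times> nat" where
  "pair_seq n a \<tau> = (\<lambda>k. if k < n then (a, \<tau> k) else undefined)"

lemma pair_seq_inject:
  "0 < n \<Longrightarrow> pair_seq n a \<tau> = pair_seq n b \<sigma> \<Longrightarrow> a = b \<and> (\<forall>k<n. \<tau> k = \<sigma> k)"
  unfolding pair_seq_def by (metis prod.inject)

lemma pair_seq_comp:
  assumes "\<And>k. k < n \<Longrightarrow> \<rho> k < n" and "\<And>k. n \<le> k \<Longrightarrow> \<rho> k = k"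
  shows "pair_seq n a \<tau> \<circ> \<rho> = pair_seq n a (\<tau> \<circ> \<rho>)"
  using assms by (auto simp: pair_seq_def fun_eq_iff not_less)

lemma pair_seq_in_nseqs: "pair_seq n a \<tau> \<in> nseqs n UNIV"
  by (simp add: pair_seq_def nseqs_def)

lemma is_nmap_comp: "is_nmap n \<tau> \<Longrightarrow> (\<And>k. k < n \<Longrightarrow> \<rho> k < n) \<Longrightarrow> is_nmap n (\<tau> \<circ> \<rho>)"
  by (simp add: is_nmap_def)

locale atomic_sa_algebra = sa_algebra +
  assumes pos: "0 < n"
    and atomic: "atomic TYPE('a)"
    and sum_s_tau_atoms: "\<And>\<tau>. is_nmap n \<tau> \<Longrightarrow> is_sum {s \<tau> x | x. is_atom x} top"
begin

definition rep_base :: "(nat \<Rightarrow> 'a \<times> nat) set" where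
  "rep_base = {pair_seq n a \<tau> | a \<tau>. is_atom a \<and> is_nmap n \<tau>}"

definition rep :: "'a \<Rightarrow> (nat \<Rightarrow> 'a \<times> nat) set" where
  "rep x = {pair_seq n a \<tau> | a \<tau>. is_atom a \<and> is_nmap n \<tau> \<and> a \<le> s \<tau> x}"

lemma rep_subset: "rep x \<subseteq> rep_base"
  by (auto simp: rep_def rep_base_def)

lemma pair_seq_in_rep_base: "is_atom a \<Longrightarrow> is_nmap n \<tau> \<Longrightarrow> pair_seq n a \<tau> \<in> rep_base"
  by (auto simp: rep_base_def)

lemma pair_seq_in_rep_iff:
  assumes "is_atom a" and "is_nmap n \<tau>"
  shows "pair_seq n a \<tau> \<in> rep x \<longleftrightarrow> a \<le> s \<tau> x"
proof
  assume "pair_seq n a \<tau> \<in> rep x"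
  then obtain b \<sigma> where eq: "pair_seq n a \<tau> = pair_seq n b \<sigma>" and "b \<le> s \<sigma> x"
    by (auto simp: rep_def)
  moreover from pair_seq_inject[OF pos eq] have "a = b" and "s \<tau> = s \<sigma>"
    by (auto intro: s_tau_cong)
  ultimately show "a \<le> s \<tau> x" by simp
qed (use assms in \<open>auto simp: rep_def\<close>)

lemma rep_base_eqI:
  assumes "A \<subseteq> rep_base" and "B \<subseteq> rep_base"
    and "\<And>a \<tau>. is_atom a \<Longrightarrow> is_nmap n \<tau> \<Longrightarrow> pair_seq n a \<tau> \<in> A \<longleftrightarrow> pair_seq n a \<tau> \<in> B"
  shows "A = B"
  using assms unfolding rep_base_def by blast

lemma exists_atom_le_s_tau:
  assumes "is_atom b" and "is_nmap n \<tau>"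
  obtains c where "is_atom c" and "b \<le> s \<tau> c"
proof (rule ccontr)
  assume "\<not> thesis"
  with that have "\<forall>y\<in>{s \<tau> c | c. is_atom c}. y \<le> - b"
    using atom_le_compl_iff[OF assms(1)] compl_le_swap1 by blast
  with sum_s_tau_atoms[OF assms(2)] have "top \<le> - b" unfolding is_sum_def by blast
  then have "b \<le> - top" by (rule compl_le_swap1)
  then show False using assms(1) by (simp add: is_atom_def bot_unique)
qed

lemma le_s_tau_prod:
  assumes b: "is_atom b" and \<tau>: "is_nmap n \<tau>" and p: "is_prod Y p"
    and Y: "\<And>y. y \<in> Y \<Longrightarrow> b \<le> s \<tau> y"
  shows "b \<le> s \<tau> p"
proof -
  obtain c where c: "is_atom c" "b \<le> s \<tau> c" using exists_atom_le_s_tau[OF b \<tau>] .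
  have "c \<le> y" if "y \<in> Y" for y
  proof (rule atom_le_of_inf_ne_bot[OF c(1)])
    have "b \<le> inf (s \<tau> c) (s \<tau> y)" using c Y[OF that] by simp
    also have "\<dots> = s \<tau> (inf c y)" by (simp add: s_tau_inf[OF \<tau>])
    finally show "inf c y \<noteq> bot"
      using b bool_endo_bot[OF bool_endo_s_tau[OF \<tau>]] by (auto simp: is_atom_def bot_unique)
  qed
  with p have "c \<le> p" by (simp add: is_prod_def)
  then show ?thesis using c(2) bool_endo_mono[OF bool_endo_s_tau[OF \<tau>]] order_trans by blast
qed

lemma inj_rep: "inj rep"
proof (rule injI, rule ccontr)
  fix x y assume "rep x = rep y" and "x \<noteq> y"
  then obtain a where a: "is_atom a" and "a \<le> x \<longleftrightarrow> \<not> a \<le> y"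
    using atomic_separating_atom[OF atomic] by blast
  moreover have "pair_seq n a id \<in> rep x \<longleftrightarrow> pair_seq n a id \<in> rep y"
    using \<open>rep x = rep y\<close> by simp
  ultimately show False
    using pair_seq_in_rep_iff[OF a] by (simp add: is_nmap_def s_tau_id)
qed

lemma rep_inf: "rep (inf x y) = rep x \<inter> rep y"
proof (rule rep_base_eqI)
  fix a :: 'a and \<tau> assume "is_atom a" "is_nmap n \<tau>"
  then show "pair_seq n a \<tau> \<in> rep (inf x y) \<longleftrightarrow> pair_seq n a \<tau> \<in> rep x \<inter> rep y"
    by (simp add: pair_seq_in_rep_iff s_tau_inf)
qed (use rep_subset in blast)+

lemma rep_compl: "rep (- x) = rep_base - rep x"
proof (rule rep_base_eqI)
  fix a :: 'a and \<tau> assume "is_atom a" "is_nmap n \<tau>"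
  then show "pair_seq n a \<tau> \<in> rep (- x) \<longleftrightarrow> pair_seq n a \<tau> \<in> rep_base - rep x"
    by (simp add: pair_seq_in_rep_iff s_tau_compl atom_le_compl_iff pair_seq_in_rep_base)
qed (use rep_subset in blast)+

lemma rep_letter:
  assumes l: "letter_ok n l"
  shows "rep (word_eval ss sw [l] x) = {q \<in> rep_base. q \<circ> letter_map l \<in> rep x}"
proof (rule rep_base_eqI)
  fix a :: 'a and \<tau> assume a: "is_atom a" and \<tau>: "is_nmap n \<tau>"
  have "pair_seq n a \<tau> \<circ> letter_map l = pair_seq n a (\<tau> \<circ> letter_map l)"
    using l by (intro pair_seq_comp) (simp_all add: letter_map_less letter_map_fixed)
  moreover have "is_nmap n (\<tau> \<circ> letter_map l)"
    using \<tau> l by (intro is_nmap_comp) (simp_all add: letter_map_less)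
  moreover have "s \<tau> (word_eval ss sw [l] x) = s (\<tau> \<circ> letter_map l) x"
    using s_tau_word_eval[OF \<tau>, of "[l]"] l by (simp add: word_ok_def)
  ultimately show "pair_seq n a \<tau> \<in> rep (word_eval ss sw [l] x) \<longleftrightarrow>
      pair_seq n a \<tau> \<in> {q \<in> rep_base. q \<circ> letter_map l \<in> rep x}"
    using a \<tau> by (simp add: pair_seq_in_rep_iff pair_seq_in_rep_base)
qed (use rep_subset in blast)+

lemma rep_prod:
  assumes p: "is_prod Y p"
  shows "rep p = rep_base \<inter> \<Inter> (rep ` Y)"
proof (rule rep_base_eqI)
  fix a :: 'a and \<tau> assume a: "is_atom a" and \<tau>: "is_nmap n \<tau>"
  have "a \<le> s \<tau> p \<longleftrightarrow> (\<forall>y\<in>Y. a \<le> s \<tau> y)"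
  proof
    assume "a \<le> s \<tau> p"
    moreover have "s \<tau> p \<le> s \<tau> y" if "y \<in> Y" for y
      using p that bool_endo_mono[OF bool_endo_s_tau[OF \<tau>]] by (simp add: is_prod_def)
    ultimately show "\<forall>y\<in>Y. a \<le> s \<tau> y" using order_trans by blast
  qed (use le_s_tau_prod[OF a \<tau> p] in blast)
  then show "pair_seq n a \<tau> \<in> rep p \<longleftrightarrow> pair_seq n a \<tau> \<in> rep_base \<inter> \<Inter> (rep ` Y)"
    using a \<tau> by (simp add: pair_seq_in_rep_iff pair_seq_in_rep_base)
qed (use rep_subset in blast)+

lemma dipermutable_rep_base: "dipermutable n (UNIV :: ('a \<times> nat) set) rep_base"
  unfolding dipermutable_def
proof (intro conjI ballI allI impI)
  show "rep_base \<subseteq> nseqs n UNIV"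
    by (auto simp: rep_base_def pair_seq_in_nseqs)
next
  fix q i j assume "q \<in> rep_base" and ij: "i \<noteq> j \<and> i < n \<and> j < n"
  then obtain a \<tau> where q: "q = pair_seq n a \<tau>" and a: "is_atom a" and \<tau>: "is_nmap n \<tau>"
    by (auto simp: rep_base_def)
  have "q \<circ> letter_map l \<in> rep_base" if l: "letter_ok n l" for l
  proof -
    have "q \<circ> letter_map l = pair_seq n a (\<tau> \<circ> letter_map l)"
      using q l by (auto intro: pair_seq_comp simp: letter_map_less letter_map_fixed)
    moreover have "is_nmap n (\<tau> \<circ> letter_map l)"
      using \<tau> l by (intro is_nmap_comp) (simp_all add: letter_map_less)
    ultimately show ?thesis using a by (simp add: pair_seq_in_rep_base)
  qed
  from this[of "SRep i j"] this[of "SSw i j"] ij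
  show "q \<circ> repl_map i j \<in> rep_base" and "q \<circ> transp_map i j \<in> rep_base" by simp_all
qed

lemma complete_rep_rep: "complete_rep n ss sw rep_base rep"
  unfolding complete_rep_def
  using rep_subset inj_rep rep_inf rep_compl rep_prod
    rep_letter[of "SRep _ _"] rep_letter[of "SSw _ _"] by simp

theorem completely_representable: "completely_representable_in TYPE('a \<times> nat) n ss sw"
  unfolding completely_representable_in_def
  using dipermutable_rep_base complete_rep_rep by blast

end

locale complete_sa_rep = sa_algebra +
  fixes U :: "'b set" and D :: "(nat \<Rightarrow> 'b) set" and f :: "'a \<Rightarrow> (nat \<Rightarrow> 'b) set"
  assumes dipermutable: "dipermutable n U D"
    and complete: "complete_rep n ss sw D f"
begin

lemma f_subset: "f x \<subseteq> D"
  and inj_f: "inj f"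
  and f_inf: "f (inf x y) = f x \<inter> f y"
  and f_compl: "f (- x) = D - f x"
  and f_prod: "is_prod Y p \<Longrightarrow> f p = D \<inter> \<Inter> (f ` Y)"
  using complete by (simp_all add: complete_rep_def)

lemma f_bot: "f bot = {}"
  using f_inf[of bot "- bot"] f_compl[of bot] f_subset[of bot] by auto

lemma f_top: "f top = D"
  using f_compl[of bot] f_bot by simp

lemma f_nonempty: "x \<noteq> bot \<Longrightarrow> f x \<noteq> {}"
  using inj_f f_bot by (metis injD)

lemma f_mono: "x \<le> y \<Longrightarrow> f x \<subseteq> f y"
  by (metis f_inf inf.absorb1 inf.cobounded2)

lemma f_sum:
  assumes "is_sum X x"
  shows "f x = \<Union> (f ` X)"
proof -
  have "D - f x = D \<inter> (\<Inter>y\<in>X. D - f y)"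
    using f_prod[OF is_prod_uminus_image[OF assms]] by (simp add: f_compl image_image)
  then show ?thesis using f_subset by blast
qed

lemma comp_word_hat_mem:
  assumes "word_ok n w" and "q \<in> D"
  shows "q \<circ> word_hat w \<in> D \<and> (q \<in> f (word_eval ss sw w x) \<longleftrightarrow> q \<circ> word_hat w \<in> f x)"
  using assms
proof (induction w arbitrary: q)
  case (Cons l w)
  then have ok: "letter_ok n l" "word_ok n w" by (simp_all add: word_ok_def)
  have qD: "q \<circ> letter_map l \<in> D"
    using dipermutable Cons.prems(2) ok(1) by (cases l) (auto simp: dipermutable_def)
  have "q \<in> f (word_eval ss sw (l # w) x) \<longleftrightarrow> q \<circ> letter_map l \<in> f (word_eval ss sw w x)"
    using complete Cons.prems(2) ok(1) by (cases l) (auto simp: complete_rep_def)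
  then show ?case using Cons.IH[OF ok(2) qD] by (simp add: comp_assoc)
qed simp

lemma exists_nonzero_avoiding:
  assumes "\<And>a. is_atom a \<Longrightarrow> \<not> a \<le> e" and "e \<noteq> bot"
  obtains d where "d \<le> e" and "d \<noteq> bot" and "q \<notin> f d"
proof -
  obtain d where d: "d \<le> e" "d \<noteq> bot" "d \<noteq> e"
    using assms unfolding is_atom_def by blast
  define d' where "d' = inf e (- d)"
  have "d' \<noteq> bot"
    using d by (metis d'_def antisym double_compl inf_shunt)
  moreover have "f d \<inter> f d' = {}"
    using f_inf[of d d'] f_bot by (simp add: d'_def inf_commute inf_left_commute)
  ultimately show thesis using d that[of d] that[of d'] by (auto simp: d'_def)
qed

theorem atomic: "atomic TYPE('a)"
  unfolding atomic_def
proof (intro allI impI, rule ccontr)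
  fix x :: 'a assume "x \<noteq> bot" and no_atom: "\<not> (\<exists>a. is_atom a \<and> a \<le> x)"
  then obtain q where q: "q \<in> f x" using f_nonempty by blast
  have "is_sum {b. b \<le> x \<and> q \<notin> f b} x"
    unfolding is_sum_def
  proof (intro conjI allI impI ballI)
    fix c assume ub: "\<forall>b\<in>{b. b \<le> x \<and> q \<notin> f b}. b \<le> c"
    show "x \<le> c"
    proof (rule ccontr)
      assume "\<not> x \<le> c"
      then have "inf x (- c) \<noteq> bot" by (simp add: inf_shunt)
      moreover have "\<not> a \<le> inf x (- c)" if "is_atom a" for a
        using no_atom that by auto
      ultimately obtain d where "d \<le> inf x (- c)" "d \<noteq> bot" "q \<notin> f d"
        using exists_nonzero_avoiding by metis
      with ub show False by (metis le_inf_iff mem_Collect_eq inf_shunt inf.orderE)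
    qed
  qed simp
  with q show False by (auto dest: f_sum)
qed

theorem sum_s_tau_atoms:
  assumes \<tau>: "is_nmap n \<tau>"
  shows "is_sum {s \<tau> x | x. is_atom x} top"
proof -
  obtain w where w: "realizes n w \<tau>" using realizes_nmap[OF \<tau>] ..
  then have s_\<tau>: "s \<tau> = word_eval ss sw w" and ok: "word_ok n w"
    by (simp_all add: s_tau_eq_word_eval realizes_def)
  have cover: "D \<subseteq> \<Union> (f ` {s \<tau> x | x. is_atom x})"
  proof
    fix q assume q: "q \<in> D"
    have "q \<circ> word_hat w \<in> f top"
      using comp_word_hat_mem[OF ok q] by (simp add: f_top)
    then obtain a where a: "is_atom a" and "q \<circ> word_hat w \<in> f a"
      using f_sum[OF is_sum_atoms_top[OF atomic]] by auto
    then have "q \<in> f (s \<tau> a)"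
      using comp_word_hat_mem[OF ok q] by (simp add: s_\<tau>)
    with a show "q \<in> \<Union> (f ` {s \<tau> x | x. is_atom x})" by blast
  qed
  show ?thesis
    unfolding is_sum_def
  proof (intro conjI allI impI ballI top_greatest)
    fix c assume "\<forall>y\<in>{s \<tau> x | x. is_atom x}. y \<le> c"
    then have "\<Union> (f ` {s \<tau> x | x. is_atom x}) \<subseteq> f c" using f_mono by blast
    with cover have "D \<subseteq> f c" by (rule order_trans)
    then have "f (- c) = {}" by (simp add: f_compl)
    then have "- c = bot" using f_nonempty by blast
    then show "top \<le> c" by (metis compl_bot_eq double_compl order_refl)
  qed
qed

end

theorem mainTheorem11:
  fixes n :: nat
    and ss sw :: "nat \<Rightarrow> nat \<Rightarrow> 'a::boolean_algebra \<Rightarrow> 'a"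
  assumes "2 \<le> n" and "SA n ss sw"
  shows "((atomic TYPE('a) \<and>
            (\<forall>\<tau>. is_nmap n \<tau> \<longrightarrow> is_sum {s_tau n ss sw \<tau> x | x. is_atom x} top))
           \<longrightarrow> completely_representable_in TYPE('a \<times> nat) n ss sw)
       \<and> (completely_representable_in TYPE('b) n ss sw
           \<longrightarrow> (atomic TYPE('a) \<and>
                (\<forall>\<tau>. is_nmap n \<tau> \<longrightarrow> is_sum {s_tau n ss sw \<tau> x | x. is_atom x} top)))"
proof -
  interpret sa_algebra n ss sw by (rule sa_algebra.intro) (rule assms(2))
  show ?thesis
  proof (intro conjI impI)
    assume "atomic TYPE('a) \<and>
      (\<forall>\<tau>. is_nmap n \<tau> \<longrightarrow> is_sum {s_tau n ss sw \<tau> x | x. is_atom x} top)"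
    then interpret atomic_sa_algebra n ss sw
      using assms(1) by unfold_locales auto
    show "completely_representable_in TYPE('a \<times> nat) n ss sw"
      by (rule completely_representable)
  next
    assume "completely_representable_in TYPE('b) n ss sw"
    then obtain U :: "'b set" and D f where "dipermutable n U D" and "complete_rep n ss sw D f"
      unfolding completely_representable_in_def by blast
    then interpret complete_sa_rep n ss sw U D f by unfold_locales
    show "atomic TYPE('a)" by (rule atomic)
    show "\<forall>\<tau>. is_nmap n \<tau> \<longrightarrow> is_sum {s_tau n ss sw \<tau> x | x. is_atom x} top"
      by (intro allI impI sum_s_tau_atoms)
  qed
qed

end
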